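(* For any optimal solution $\mathbf p$ (pure strategy profile maximizing $TR$), $TR(\mathbf p)\le \mu m\left(1-\frac{\mu}{n_1\phi+\mu}\right)$.
   Context: Network model: there are $m\ge 2$ source nodes $s_1,\dots,s_m$ and one destination $d$. Source $s_i$ has a set $N_i$ of $n_i$ users, with $n_1>n_2>\dots>n_m$. Each user generates an independent Poisson flow of packets of rate $\phi>0$; each direct link $(s_i,d)$ has service rate $\mu>0$; each sidelink loses packets independently with probability $q\in[0,1]$, and $\bar q=1-q$. A pure strategy of a user in $N_i$ is either the direct path (DP) $(s_i,d)$ or an indirect path (IP) $(s_i,s_j,d)$, $j\neq i$. For a pure profile, $u_i$ is the number of users of $N_i$ choosing DP and $v_i$ the number of users of other sources choosing an IP $(s_j,s_i,d)$. With $T_i=u_i\phi+v_i\bar q\phi$, the total traffic rate is $TR=\sum_i\frac{\mu T_i}{T_i+\mu}$. *)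

theory Defs
  imports Complex_Main
begin

text \<open>Sources are indexed 0..<m (source s_(i+1) of the paper is index i); the users of
source i are indexed 0..<n i.  A pure strategy profile p assigns to user k of source i
a source index p i k < m: p i k = i means the direct path (s_i,d), p i k = j \<noteq> i means
the indirect path (s_i,s_j,d).\<close>

definition valid_profile :: "nat \<Rightarrow> (nat \<Rightarrow> nat) \<Rightarrow> (nat \<Rightarrow> nat \<Rightarrow> nat) \<Rightarrow> bool" where
  "valid_profile m n p \<longleftrightarrow> (\<forall>i<m. \<forall>k<n i. p i k < m)"

definition u_cnt :: "(nat \<Rightarrow> nat) \<Rightarrow> (nat \<Rightarrow> nat \<Rightarrow> nat) \<Rightarrow> nat \<Rightarrow> nat" where
  "u_cnt n p i = card {k. k < n i \<and> p i k = i}"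

definition v_cnt :: "nat \<Rightarrow> (nat \<Rightarrow> nat) \<Rightarrow> (nat \<Rightarrow> nat \<Rightarrow> nat) \<Rightarrow> nat \<Rightarrow> nat" where
  "v_cnt m n p i = card {(j, k). j < m \<and> j \<noteq> i \<and> k < n j \<and> p j k = i}"

definition T_rate :: "nat \<Rightarrow> (nat \<Rightarrow> nat) \<Rightarrow> real \<Rightarrow> real \<Rightarrow> (nat \<Rightarrow> nat \<Rightarrow> nat) \<Rightarrow> nat \<Rightarrow> real" where
  "T_rate m n phi q p i = real (u_cnt n p i) * phi + real (v_cnt m n p i) * (1 - q) * phi"

definition TR :: "nat \<Rightarrow> (nat \<Rightarrow> nat) \<Rightarrow> real \<Rightarrow> real \<Rightarrow> real \<Rightarrow> (nat \<Rightarrow> nat \<Rightarrow> nat) \<Rightarrow> real" where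
  "TR m n phi mu q p = (\<Sum>i<m. mu * T_rate m n phi q p i / (T_rate m n phi q p i + mu))"

definition optimal_profile :: "nat \<Rightarrow> (nat \<Rightarrow> nat) \<Rightarrow> real \<Rightarrow> real \<Rightarrow> real \<Rightarrow> (nat \<Rightarrow> nat \<Rightarrow> nat) \<Rightarrow> bool" where
  "optimal_profile m n phi mu q p \<longleftrightarrow> valid_profile m n p \<and>
     (\<forall>p'. valid_profile m n p' \<longrightarrow> TR m n phi mu q p' \<le> TR m n phi mu q p)"

end

theory Submission
  imports Defs
begin

text \<open>Every user loads at most one direct link, so the total load satisfies
\<open>\<Sum>i T_i \<le> \<phi> \<Sum>j n_j \<le> m n_1 \<phi>\<close>. The throughput \<open>T \<mapsto> \<mu>T/(T + \<mu>)\<close> of a link is concave,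
so it lies below its tangent at \<open>a = n_1 \<phi>\<close>; summing the tangent bounds over the \<open>m\<close> links
gives \<open>TR \<le> m \<mu> a/(a + \<mu>)\<close>.\<close>

definition routed_users :: "nat \<Rightarrow> (nat \<Rightarrow> nat) \<Rightarrow> (nat \<Rightarrow> nat \<Rightarrow> nat) \<Rightarrow> nat \<Rightarrow> (nat \<times> nat) set" where
  "routed_users m n p i = {(j, k). j < m \<and> k < n j \<and> p j k = i}"

lemma routed_users_subset: "routed_users m n p i \<subseteq> Sigma {..<m} (\<lambda>j. {..<n j})"
  by (auto simp: routed_users_def)

lemma finite_routed_users: "finite (routed_users m n p i)"
  by (rule finite_subset[OF routed_users_subset]) simp

lemma u_cnt_add_v_cnt:
  assumes "i < m"
  shows "u_cnt n p i + v_cnt m n p i = card (routed_users m n p i)"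
proof -
  let ?direct = "Pair i ` {k. k < n i \<and> p i k = i}"
  let ?indirect = "{(j, k). j < m \<and> j \<noteq> i \<and> k < n j \<and> p j k = i}"
  have split: "routed_users m n p i = ?direct \<union> ?indirect"
    using assms by (auto simp: routed_users_def)
  have "finite ?indirect"
    by (rule finite_subset[OF _ finite_routed_users[of m n p i]]) (auto simp: routed_users_def)
  moreover have "card ?direct = u_cnt n p i"
    unfolding u_cnt_def by (simp add: card_image inj_on_def)
  ultimately show ?thesis
    unfolding split v_cnt_def by (subst card_Un_disjoint) auto
qed

lemma sum_u_cnt_add_v_cnt_le: "(\<Sum>i<m. u_cnt n p i + v_cnt m n p i) \<le> (\<Sum>j<m. n j)"
proof -
  have "(\<Sum>i<m. u_cnt n p i + v_cnt m n p i) = (\<Sum>i<m. card (routed_users m n p i))"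
    by (rule sum.cong) (simp_all add: u_cnt_add_v_cnt)
  also have "\<dots> = card (\<Union>i<m. routed_users m n p i)"
    using finite_routed_users[of m n p]
    by (intro card_UN_disjoint[symmetric]) (auto simp: routed_users_def)
  also have "\<dots> \<le> card (Sigma {..<m} (\<lambda>j. {..<n j}))"
    by (rule card_mono) (auto simp: routed_users_def)
  finally show ?thesis by simp
qed

lemma T_rate_nonneg: "phi \<ge> 0 \<Longrightarrow> q \<le> 1 \<Longrightarrow> T_rate m n phi q p i \<ge> 0"
  by (simp add: T_rate_def)

lemma T_rate_le: "phi \<ge> 0 \<Longrightarrow> q \<ge> 0 \<Longrightarrow> T_rate m n phi q p i \<le> phi * real (u_cnt n p i + v_cnt m n p i)"
  by (simp add: T_rate_def algebra_simps mult_right_mono)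

lemma sum_T_rate_le:
  assumes "phi \<ge> 0" "q \<ge> 0"
  shows "(\<Sum>i<m. T_rate m n phi q p i) \<le> phi * (\<Sum>j<m. real (n j))"
proof -
  have "(\<Sum>i<m. T_rate m n phi q p i) \<le> phi * (\<Sum>i<m. real (u_cnt n p i + v_cnt m n p i))"
    unfolding sum_distrib_left by (rule sum_mono) (rule T_rate_le[OF assms])
  also have "\<dots> \<le> phi * (\<Sum>j<m. real (n j))"
  proof (rule mult_left_mono[OF _ assms(1)])
    show "(\<Sum>i<m. real (u_cnt n p i + v_cnt m n p i)) \<le> (\<Sum>j<m. real (n j))"
      unfolding of_nat_sum[symmetric] of_nat_le_iff by (rule sum_u_cnt_add_v_cnt_le)
  qed
  finally show ?thesis .
qed

lemma throughput_le_tangent: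
  fixes mu x a :: real
  assumes "x + mu > 0" "a + mu > 0"
  shows "mu * x / (x + mu) \<le> mu * a / (a + mu) + mu\<^sup>2 / (a + mu)\<^sup>2 * (x - a)"
proof -
  obtain y d where y: "x = y - mu" "y > 0" and d: "a = d - mu" "d > 0"
    using assms by (metis add_diff_cancel_right')
  have "mu * a / (a + mu) + mu\<^sup>2 / (a + mu)\<^sup>2 * (x - a) - mu * x / (x + mu)
          = mu\<^sup>2 * (y - d)\<^sup>2 / (d\<^sup>2 * y)"
    unfolding y d using y d by (simp add: field_simps power2_eq_square)
  also have "\<dots> \<ge> 0" using y d by simp
  finally show ?thesis by simp
qed

lemma sum_throughput_le:
  fixes mu a :: real and x :: "'i \<Rightarrow> real"
  assumes "\<And>i. i \<in> I \<Longrightarrow> x i + mu > 0" "a + mu > 0"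
    and "sum x I \<le> card I * a"
  shows "(\<Sum>i\<in>I. mu * x i / (x i + mu)) \<le> card I * (mu * a / (a + mu))"
proof -
  define c where "c = mu\<^sup>2 / (a + mu)\<^sup>2"
  have "c \<ge> 0" by (simp add: c_def)
  have "(\<Sum>i\<in>I. mu * x i / (x i + mu)) \<le> (\<Sum>i\<in>I. mu * a / (a + mu) + c * (x i - a))"
    unfolding c_def by (rule sum_mono) (rule throughput_le_tangent[OF assms(1) assms(2)])
  also have "\<dots> = card I * (mu * a / (a + mu)) + c * (sum x I - card I * a)"
    by (simp add: sum.distrib sum_subtractf sum_distrib_left algebra_simps)
  also have "\<dots> \<le> card I * (mu * a / (a + mu))"
    using \<open>c \<ge> 0\<close> assms(3) by (simp add: mult_nonneg_nonpos)
  finally show ?thesis .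
qed

theorem lemma3:
  fixes m :: nat and n :: "nat \<Rightarrow> nat" and phi mu q :: real
    and p :: "nat \<Rightarrow> nat \<Rightarrow> nat"
  assumes "m \<ge> 2"
    and "\<And>i j. i < j \<Longrightarrow> j < m \<Longrightarrow> n i > n j"
    and "phi > 0" and "mu > 0" and "0 \<le> q" and "q \<le> 1"
    and "optimal_profile m n phi mu q p"
  shows "TR m n phi mu q p \<le> mu * real m * (1 - mu / (real (n 0) * phi + mu))"
proof -
  define a where "a = real (n 0) * phi"
  have "a + mu > 0" using assms(3,4) by (simp add: a_def add_nonneg_pos)
  have n_le: "real (n j) \<le> real (n 0)" if "j < m" for j
    using assms(2)[of 0 j] that by (cases "j = 0") auto
  have "(\<Sum>i<m. T_rate m n phi q p i) \<le> phi * (\<Sum>j<m. real (n j))"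
    using assms(3,5) by (intro sum_T_rate_le) auto
  also have "\<dots> \<le> phi * (\<Sum>j<m. real (n 0))"
    using assms(3) n_le by (intro mult_left_mono sum_mono) auto
  also have "\<dots> = card {..<m} * a" by (simp add: a_def)
  finally have "(\<Sum>i<m. T_rate m n phi q p i) \<le> card {..<m} * a" .
  then have "TR m n phi mu q p \<le> card {..<m} * (mu * a / (a + mu))"
    unfolding TR_def using T_rate_nonneg assms(3,4,6) \<open>a + mu > 0\<close>
    by (intro sum_throughput_le) (auto intro: add_nonneg_pos)
  also have "\<dots> = mu * real m * (1 - mu / (a + mu))"
    using \<open>a + mu > 0\<close> by (simp add: field_simps)
  finally show ?thesis by (simp add: a_def)
qed

end
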